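(* Let $\mathrm{BRM}$ denote the supremum, over all (possibly randomized) mechanisms with allocation $x:V\to[0,1]^n$ and real payment rule $p_i(v,r)$ satisfying BIC, BIR and ex-post feasibility (with perceived payments $p_i^2$), of the expected revenue $\mathbb{E}_{v,r}[\sum_i p_i(v,r)]$. Then $\mathrm{BRM}$ equals the optimal value of the program $$\max_{x}\ \sum_{i=1}^n\sum_{\ell=1}^{K_i} f_i(z_{i,\ell})\,h_i(z_{i,\ell})$$ subject to: $x_i(v)\in[0,1]$ and $\sum_i x_i(v)\le 1$ for all $v\in V$; $\hat x_i(z_{i,\ell})\ge\hat x_i(z_{i,\ell-1})$ for all $i$ and $2\le\ell\le K_i$; and $h_i(z_{i,\ell})=\sqrt{z_{i,\ell}\hat x_i(z_{i,\ell})-\sum_{j=1}^{\ell-1}(z_{i,j+1}-z_{i,j})\hat x_i(z_{i,j})}$. Moreover this value is attained by the mechanism with the optimal allocation $x$ and deterministic payments $h_i(v_i)$ depending only on bidder $i$'s own type.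
   Context: There are $n$ bidders; bidder $i$'s type space is $V_i=\{z_{i,1}<\dots<z_{i,K_i}\}\subset[0,\infty)$, types independent with pmfs $f_i$, $V=\prod_iV_i$. Bidder $i$ with true type $v_i$ reporting $w_i$ has utility $v_i x_i(w_i,v_{-i})-(\text{payment})^2$. Interim allocation $\hat x_i(v_i)=\mathbb{E}_{v_{-i}}[x_i(v_i,v_{-i})]$; interim perceived payment $\hat q_i(v_i)=\mathbb{E}_{v_{-i},r}[p_i(v_i,v_{-i},r)^2]$. BIC: $v_i\hat x_i(v_i)-\hat q_i(v_i)\ge v_i\hat x_i(w_i)-\hat q_i(w_i)$ for all $i,v_i,w_i$; BIR: $v_i\hat x_i(v_i)-\hat q_i(v_i)\ge0$; ex-post feasibility: $\sum_ix_i(v)\le1$ for all $v$. *)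

theory Defs
  imports "HOL-Probability.Probability"
begin

text \<open>Bidders are 0..n-1. Bidder i's types are z i 0 < ... < z i (K i - 1)
  (0-indexed version of z_{i,1} < ... < z_{i,K_i}); f i is its pmf on these values.\<close>

definition typeset :: "(nat \<Rightarrow> nat) \<Rightarrow> (nat \<Rightarrow> nat \<Rightarrow> real) \<Rightarrow> nat \<Rightarrow> real set" where
  "typeset K z i = z i ` {..<K i}"

definition prof :: "nat \<Rightarrow> (nat \<Rightarrow> nat) \<Rightarrow> (nat \<Rightarrow> nat \<Rightarrow> real) \<Rightarrow> (nat \<Rightarrow> real) set" where
  "prof n K z = PiE {..<n} (typeset K z)"

definition xhat :: "nat \<Rightarrow> (nat \<Rightarrow> nat) \<Rightarrow> (nat \<Rightarrow> nat \<Rightarrow> real) \<Rightarrow> (nat \<Rightarrow> real \<Rightarrow> real)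
    \<Rightarrow> ((nat \<Rightarrow> real) \<Rightarrow> nat \<Rightarrow> real) \<Rightarrow> nat \<Rightarrow> real \<Rightarrow> real" where
  "xhat n K z f x i t =
     (\<Sum>w\<in>{w\<in>prof n K z. w i = t}. (\<Prod>j\<in>{..<n}-{i}. f j (w j)) * x w i)"

definition qhat :: "nat \<Rightarrow> (nat \<Rightarrow> nat) \<Rightarrow> (nat \<Rightarrow> nat \<Rightarrow> real) \<Rightarrow> (nat \<Rightarrow> real \<Rightarrow> real)
    \<Rightarrow> 'r measure \<Rightarrow> (nat \<Rightarrow> (nat \<Rightarrow> real) \<Rightarrow> 'r \<Rightarrow> real) \<Rightarrow> nat \<Rightarrow> real \<Rightarrow> real" where
  "qhat n K z f M p i t =
     (\<Sum>w\<in>{w\<in>prof n K z. w i = t}. (\<Prod>j\<in>{..<n}-{i}. f j (w j)) * (\<integral>r. (p i w r)\<^sup>2 \<partial>M))"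

definition BIC :: "nat \<Rightarrow> (nat \<Rightarrow> nat) \<Rightarrow> (nat \<Rightarrow> nat \<Rightarrow> real) \<Rightarrow> (nat \<Rightarrow> real \<Rightarrow> real)
    \<Rightarrow> 'r measure \<Rightarrow> ((nat \<Rightarrow> real) \<Rightarrow> nat \<Rightarrow> real) \<Rightarrow> (nat \<Rightarrow> (nat \<Rightarrow> real) \<Rightarrow> 'r \<Rightarrow> real) \<Rightarrow> bool" where
  "BIC n K z f M x p \<longleftrightarrow>
     (\<forall>i<n. \<forall>v\<in>typeset K z i. \<forall>w\<in>typeset K z i.
        v * xhat n K z f x i v - qhat n K z f M p i v \<ge> v * xhat n K z f x i w - qhat n K z f M p i w)"

definition BIR :: "nat \<Rightarrow> (nat \<Rightarrow> nat) \<Rightarrow> (nat \<Rightarrow> nat \<Rightarrow> real) \<Rightarrow> (nat \<Rightarrow> real \<Rightarrow> real)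
    \<Rightarrow> 'r measure \<Rightarrow> ((nat \<Rightarrow> real) \<Rightarrow> nat \<Rightarrow> real) \<Rightarrow> (nat \<Rightarrow> (nat \<Rightarrow> real) \<Rightarrow> 'r \<Rightarrow> real) \<Rightarrow> bool" where
  "BIR n K z f M x p \<longleftrightarrow>
     (\<forall>i<n. \<forall>v\<in>typeset K z i. v * xhat n K z f x i v - qhat n K z f M p i v \<ge> 0)"

definition feasible_alloc :: "nat \<Rightarrow> (nat \<Rightarrow> nat) \<Rightarrow> (nat \<Rightarrow> nat \<Rightarrow> real)
    \<Rightarrow> ((nat \<Rightarrow> real) \<Rightarrow> nat \<Rightarrow> real) \<Rightarrow> bool" where
  "feasible_alloc n K z x \<longleftrightarrow>
     (\<forall>v\<in>prof n K z. (\<forall>i<n. 0 \<le> x v i \<and> x v i \<le> 1) \<and> (\<Sum>i<n. x v i) \<le> 1)"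

text \<open>A (possibly randomized) mechanism: randomness r drawn from the probability space M,
  real payments p i v r (measurable, with finite expected square).\<close>
definition valid_mech :: "nat \<Rightarrow> (nat \<Rightarrow> nat) \<Rightarrow> (nat \<Rightarrow> nat \<Rightarrow> real) \<Rightarrow> (nat \<Rightarrow> real \<Rightarrow> real)
    \<Rightarrow> 'r measure \<Rightarrow> ((nat \<Rightarrow> real) \<Rightarrow> nat \<Rightarrow> real) \<Rightarrow> (nat \<Rightarrow> (nat \<Rightarrow> real) \<Rightarrow> 'r \<Rightarrow> real) \<Rightarrow> bool" where
  "valid_mech n K z f M x p \<longleftrightarrow>
     prob_space M \<and> feasible_alloc n K z x \<and>
     (\<forall>i<n. \<forall>v\<in>prof n K z. p i v \<in> borel_measurable M \<and> integrable M (\<lambda>r. (p i v r)\<^sup>2)) \<and>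
     BIC n K z f M x p \<and> BIR n K z f M x p"

definition revenue :: "nat \<Rightarrow> (nat \<Rightarrow> nat) \<Rightarrow> (nat \<Rightarrow> nat \<Rightarrow> real) \<Rightarrow> (nat \<Rightarrow> real \<Rightarrow> real)
    \<Rightarrow> 'r measure \<Rightarrow> (nat \<Rightarrow> (nat \<Rightarrow> real) \<Rightarrow> 'r \<Rightarrow> real) \<Rightarrow> real" where
  "revenue n K z f M p =
     (\<Sum>v\<in>prof n K z. (\<Prod>i<n. f i (v i)) * (\<integral>r. (\<Sum>i<n. p i v r) \<partial>M))"

text \<open>h_i(z_{i,l}) (0-indexed l)\<close>
definition hfun :: "nat \<Rightarrow> (nat \<Rightarrow> nat) \<Rightarrow> (nat \<Rightarrow> nat \<Rightarrow> real) \<Rightarrow> (nat \<Rightarrow> real \<Rightarrow> real)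
    \<Rightarrow> ((nat \<Rightarrow> real) \<Rightarrow> nat \<Rightarrow> real) \<Rightarrow> nat \<Rightarrow> nat \<Rightarrow> real" where
  "hfun n K z f x i l =
     sqrt (z i l * xhat n K z f x i (z i l)
           - (\<Sum>j<l. (z i (Suc j) - z i j) * xhat n K z f x i (z i j)))"

definition program_feasible :: "nat \<Rightarrow> (nat \<Rightarrow> nat) \<Rightarrow> (nat \<Rightarrow> nat \<Rightarrow> real) \<Rightarrow> (nat \<Rightarrow> real \<Rightarrow> real)
    \<Rightarrow> ((nat \<Rightarrow> real) \<Rightarrow> nat \<Rightarrow> real) \<Rightarrow> bool" where
  "program_feasible n K z f x \<longleftrightarrow>
     feasible_alloc n K z x \<and>
     (\<forall>i<n. \<forall>l. 1 \<le> l \<and> l < K i \<longrightarrow>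
        xhat n K z f x i (z i l) \<ge> xhat n K z f x i (z i (l - 1)))"

definition program_obj :: "nat \<Rightarrow> (nat \<Rightarrow> nat) \<Rightarrow> (nat \<Rightarrow> nat \<Rightarrow> real) \<Rightarrow> (nat \<Rightarrow> real \<Rightarrow> real)
    \<Rightarrow> ((nat \<Rightarrow> real) \<Rightarrow> nat \<Rightarrow> real) \<Rightarrow> real" where
  "program_obj n K z f x = (\<Sum>i<n. \<Sum>l<K i. f i (z i l) * hfun n K z f x i l)"

definition hpay :: "nat \<Rightarrow> (nat \<Rightarrow> nat) \<Rightarrow> (nat \<Rightarrow> nat \<Rightarrow> real) \<Rightarrow> (nat \<Rightarrow> real \<Rightarrow> real)
    \<Rightarrow> ((nat \<Rightarrow> real) \<Rightarrow> nat \<Rightarrow> real) \<Rightarrow> nat \<Rightarrow> (nat \<Rightarrow> real) \<Rightarrow> 'r \<Rightarrow> real" where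
  "hpay n K z f x i v r = hfun n K z f x i (THE l. l < K i \<and> z i l = v i)"

end

theory Submission
  imports Defs
begin

text \<open>Write X_i(l) for the interim allocation of bidder i at its l-th type z_il. Comparing
  adjacent BIC constraints shows that X_i is nondecreasing, and chaining them down to BIR at the
  lowest type bounds the expected squared payment of type z_il by
  z_il X_i(l) - sum_{j<l} (z_i(j+1) - z_ij) X_i(j) = h_i(z_il)^2.
  Since an expectation is at most the square root of the expected square, every mechanism earns
  at most the program objective of its own allocation. Conversely, for a monotone allocation the
  payments h_i(v_i) attain these bounds, and they are BIC because the subtracted information rents
  are Riemann sums of the monotone X_i. The program attains its maximum because, once allocations
  are zeroed off the type profiles, its feasible set is compact.\<close>

lemma continuous_on_apply2 [continuous_intros]:
  "continuous_on S (\<lambda>x::'a \<Rightarrow> 'b \<Rightarrow> real. x w i)"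
proof -
  have "continuous_on S (\<lambda>x::'a \<Rightarrow> 'b \<Rightarrow> real. x w)"
    by (rule continuous_on_subset[OF continuous_on_product_coordinates]) simp
  then show ?thesis
    by (rule continuous_on_product_then_coordinatewise)
qed

lemma compact_PiE_UNIV:
  assumes "\<And>i. compact (S i)"
  shows "compact (PiE UNIV S :: ('a \<Rightarrow> 'b::topological_space) set)"
proof -
  have "compactin (product_topology (\<lambda>i. euclidean) UNIV) (PiE UNIV S)"
    unfolding compactin_PiE using assms by simp
  then show ?thesis
    by (simp only: euclidean_product_topology compactin_euclidean_iff)
qed

lemma le_sqrt_if_tangent_bounds:
  fixes y q :: real
  assumes "0 \<le> q" and tangent: "\<And>c. 0 < c \<Longrightarrow> y \<le> q / (2 * c) + c / 2"
  shows "y \<le> sqrt q"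
proof (cases "q = 0")
  case True
  show ?thesis
  proof (rule ccontr)
    assume "\<not> y \<le> sqrt q"
    then have "0 < y" using True by simp
    then show False using tangent[of y] True by simp
  qed
next
  case False
  then have "0 < sqrt q" using \<open>0 \<le> q\<close> by simp
  then have "y \<le> q / (2 * sqrt q) + sqrt q / 2" by (rule tangent)
  also have "q / (2 * sqrt q) = sqrt q / 2"
    using \<open>0 < sqrt q\<close> \<open>0 \<le> q\<close> by (simp add: field_simps real_sqrt_mult[symmetric])
  finally show ?thesis by simp
qed

lemma (in prob_space) integral_le_tangent_bound:
  fixes g :: "'a \<Rightarrow> real"
  assumes "g \<in> borel_measurable M" "integrable M (\<lambda>r. (g r)\<^sup>2)" "0 < c"
  shows "(\<integral>r. g r \<partial>M) \<le> (\<integral>r. (g r)\<^sup>2 \<partial>M) / (2 * c) + c / 2"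
proof -
  have pointwise: "g r \<le> (g r)\<^sup>2 / (2 * c) + c / 2" for r
  proof -
    have "2 * c * g r \<le> (g r)\<^sup>2 + c\<^sup>2"
      using zero_le_power2[of "g r - c"] by (simp add: power2_eq_square algebra_simps)
    then show ?thesis using \<open>0 < c\<close> by (simp add: field_simps power2_eq_square)
  qed
  have "(\<integral>r. g r \<partial>M) \<le> (\<integral>r. (g r)\<^sup>2 / (2 * c) + c / 2 \<partial>M)"
    using assms square_integrable_imp_integrable pointwise by (intro integral_mono) auto
  also have "\<dots> = (\<integral>r. (g r)\<^sup>2 \<partial>M) / (2 * c) + c / 2"
    using assms prob_space by simp
  finally show ?thesis .
qed

lemma weighted_integral_le_sqrt:
  fixes g :: "'b \<Rightarrow> 'a \<Rightarrow> real"
  assumes "prob_space M" and "\<And>w. w \<in> S \<Longrightarrow> 0 \<le> a w" and "(\<Sum>w\<in>S. a w) = 1"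
    and "\<And>w. w \<in> S \<Longrightarrow> g w \<in> borel_measurable M"
    and "\<And>w. w \<in> S \<Longrightarrow> integrable M (\<lambda>r. (g w r)\<^sup>2)"
  shows "(\<Sum>w\<in>S. a w * (\<integral>r. g w r \<partial>M)) \<le> sqrt (\<Sum>w\<in>S. a w * (\<integral>r. (g w r)\<^sup>2 \<partial>M))"
proof (rule le_sqrt_if_tangent_bounds)
  show "0 \<le> (\<Sum>w\<in>S. a w * (\<integral>r. (g w r)\<^sup>2 \<partial>M))"
    using assms(2) by (intro sum_nonneg mult_nonneg_nonneg integral_nonneg) auto
  fix c :: real
  assume "0 < c"
  have "a w * (\<integral>r. g w r \<partial>M) \<le> a w * ((\<integral>r. (g w r)\<^sup>2 \<partial>M) / (2 * c) + c / 2)"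
    if "w \<in> S" for w
    by (intro mult_left_mono prob_space.integral_le_tangent_bound[OF assms(1)] assms(2,4,5)
        that \<open>0 < c\<close>)
  then have "(\<Sum>w\<in>S. a w * (\<integral>r. g w r \<partial>M))
      \<le> (\<Sum>w\<in>S. a w * ((\<integral>r. (g w r)\<^sup>2 \<partial>M) / (2 * c) + c / 2))"
    by (rule sum_mono)
  also have "\<dots> = (\<Sum>w\<in>S. a w * (\<integral>r. (g w r)\<^sup>2 \<partial>M)) / (2 * c) + c / 2 * (\<Sum>w\<in>S. a w)"
    by (simp add: sum_distrib_left sum_distrib_right sum_divide_distrib ring_distribs
        sum.distrib mult.commute)
  finally show "(\<Sum>w\<in>S. a w * (\<integral>r. g w r \<partial>M))
      \<le> (\<Sum>w\<in>S. a w * (\<integral>r. (g w r)\<^sup>2 \<partial>M)) / (2 * c) + c / 2"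
    using assms(3) by simp
qed

lemma sum_increments_bounds:
  fixes a b :: "nat \<Rightarrow> real"
  assumes a_mono: "\<And>j k. j \<le> k \<Longrightarrow> k \<le> l \<Longrightarrow> a j \<le> a k"
    and b_mono: "\<And>j k. j \<le> k \<Longrightarrow> k \<le> l \<Longrightarrow> b j \<le> b k"
    and "m \<le> l"
  defines "S \<equiv> \<lambda>l. \<Sum>j<l. (a (Suc j) - a j) * b j"
  shows "(a l - a m) * b m \<le> S l - S m \<and> S l - S m \<le> (a l - a m) * b l"
  using \<open>m \<le> l\<close> a_mono b_mono
proof (induction l rule: dec_induct)
  case base
  then show ?case by simp
next
  case (step l)
  have IH: "(a l - a m) * b m \<le> S l - S m" "S l - S m \<le> (a l - a m) * b l"
    using step by simp_all
  have S_Suc: "S (Suc l) = S l + (a (Suc l) - a l) * b l"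
    unfolding S_def by simp
  have "0 \<le> a (Suc l) - a l" "0 \<le> a l - a m" "b m \<le> b l" "b l \<le> b (Suc l)"
    using step.prems step.hyps by auto
  then have "(a (Suc l) - a l) * b m \<le> (a (Suc l) - a l) * b l"
      "(a l - a m) * b l \<le> (a l - a m) * b (Suc l)"
      "(a (Suc l) - a l) * b l \<le> (a (Suc l) - a l) * b (Suc l)"
    by (simp_all add: mult_left_mono)
  then show ?case
    using IH S_Suc by (simp add: algebra_simps)
qed

subsection \<open>Existence of an optimal allocation\<close>

definition alloc_cube :: "'a set \<Rightarrow> nat \<Rightarrow> ('a \<Rightarrow> nat \<Rightarrow> real) set" where
  "alloc_cube P n =
     PiE UNIV (\<lambda>v. if v \<in> P then PiE UNIV (\<lambda>i. if i < n then {0..1} else {0}) else {\<lambda>_. 0})"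

lemma compact_alloc_cube: "compact (alloc_cube P n)"
  unfolding alloc_cube_def by (intro compact_PiE_UNIV) (simp add: compact_PiE_UNIV)

definition restrict_alloc :: "nat \<Rightarrow> (nat \<Rightarrow> nat) \<Rightarrow> (nat \<Rightarrow> nat \<Rightarrow> real)
    \<Rightarrow> ((nat \<Rightarrow> real) \<Rightarrow> nat \<Rightarrow> real) \<Rightarrow> (nat \<Rightarrow> real) \<Rightarrow> nat \<Rightarrow> real" where
  "restrict_alloc n K z x = (\<lambda>v i. if v \<in> prof n K z \<and> i < n then x v i else 0)"

lemma xhat_restrict_alloc:
  "i < n \<Longrightarrow> xhat n K z f (restrict_alloc n K z x) i t = xhat n K z f x i t"
  unfolding xhat_def restrict_alloc_def by (intro sum.cong) auto

lemma program_feasible_restrict_alloc: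
  "program_feasible n K z f (restrict_alloc n K z x) = program_feasible n K z f x"
  unfolding program_feasible_def feasible_alloc_def
  by (auto simp: xhat_restrict_alloc) (auto simp: restrict_alloc_def)

lemma program_obj_restrict_alloc:
  "program_obj n K z f (restrict_alloc n K z x) = program_obj n K z f x"
  unfolding program_obj_def hfun_def by (simp add: xhat_restrict_alloc)

lemma restrict_alloc_in_alloc_cube:
  "program_feasible n K z f x \<Longrightarrow> restrict_alloc n K z x \<in> alloc_cube (prof n K z) n"
  unfolding alloc_cube_def restrict_alloc_def program_feasible_def feasible_alloc_def
  by (auto simp: PiE_iff)

lemma continuous_on_xhat [continuous_intros]: "continuous_on S (\<lambda>x. xhat n K z f x i t)"
  unfolding xhat_def by (intro continuous_intros)

lemma closed_program_feasible: "closed {x. program_feasible n K z f x}"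
proof -
  have "{x. program_feasible n K z f x} =
    (\<Inter>v\<in>prof n K z. (\<Inter>i\<in>{..<n}. {x. 0 \<le> x v i} \<inter> {x. x v i \<le> 1}) \<inter> {x. (\<Sum>i<n. x v i) \<le> 1})
    \<inter> (\<Inter>i\<in>{..<n}. \<Inter>l\<in>{l. 1 \<le> l \<and> l < K i}.
          {x. xhat n K z f x i (z i (l - 1)) \<le> xhat n K z f x i (z i l)})"
    unfolding program_feasible_def feasible_alloc_def by auto
  then show ?thesis
    by (simp only:) (intro closed_Int closed_INT ballI closed_Collect_le continuous_intros)
qed

lemma program_attains_max:
  obtains x where "program_feasible n K z f x"
    "\<And>y. program_feasible n K z f y \<Longrightarrow> program_obj n K z f y \<le> program_obj n K z f x"
proof -
  let ?S = "alloc_cube (prof n K z) n \<inter> {x. program_feasible n K z f x}"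
  have "compact ?S"
    using compact_alloc_cube closed_program_feasible by (rule compact_Int_closed)
  moreover have "program_feasible n K z f (\<lambda>v i. 0)"
    unfolding program_feasible_def feasible_alloc_def xhat_def by simp
  then have "?S \<noteq> {}"
    using restrict_alloc_in_alloc_cube program_feasible_restrict_alloc by blast
  moreover have "continuous_on ?S (program_obj n K z f)"
    unfolding program_obj_def hfun_def by (intro continuous_intros)
  ultimately obtain x where x: "x \<in> ?S" "\<And>y. y \<in> ?S \<Longrightarrow> program_obj n K z f y \<le> program_obj n K z f x"
    using continuous_attains_sup by metis
  show thesis
  proof (rule that)
    show "program_feasible n K z f x" using x(1) by simp
    fix y
    assume "program_feasible n K z f y"
    then have "restrict_alloc n K z y \<in> ?S"
      using restrict_alloc_in_alloc_cube program_feasible_restrict_alloc by blast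
    then show "program_obj n K z f y \<le> program_obj n K z f x"
      using x(2) program_obj_restrict_alloc by metis
  qed
qed

subsection \<open>Type spaces\<close>

locale type_spaces =
  fixes n :: nat and K :: "nat \<Rightarrow> nat" and z :: "nat \<Rightarrow> nat \<Rightarrow> real"
    and f :: "nat \<Rightarrow> real \<Rightarrow> real"
  assumes z_mono: "\<forall>i<n. strict_mono_on {..<K i} (z i)"
    and z_nonneg: "\<forall>i<n. 0 \<le> z i 0"
    and f_pos: "\<forall>i<n. \<forall>l<K i. 0 < f i (z i l)"
    and f_sum: "\<forall>i<n. (\<Sum>l<K i. f i (z i l)) = 1"
begin

abbreviation slice :: "nat \<Rightarrow> real \<Rightarrow> (nat \<Rightarrow> real) set" where
  "slice i t \<equiv> {w \<in> prof n K z. w i = t}"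

abbreviation others_weight :: "nat \<Rightarrow> (nat \<Rightarrow> real) \<Rightarrow> real" where
  "others_weight i w \<equiv> \<Prod>j\<in>{..<n}-{i}. f j (w j)"

abbreviation xhat_at :: "((nat \<Rightarrow> real) \<Rightarrow> nat \<Rightarrow> real) \<Rightarrow> nat \<Rightarrow> nat \<Rightarrow> real" where
  "xhat_at x i l \<equiv> xhat n K z f x i (z i l)"

abbreviation qhat_at :: "'r measure \<Rightarrow> (nat \<Rightarrow> (nat \<Rightarrow> real) \<Rightarrow> 'r \<Rightarrow> real) \<Rightarrow> nat \<Rightarrow> nat \<Rightarrow> real" where
  "qhat_at M p i l \<equiv> qhat n K z f M p i (z i l)"

lemma z_le:
  assumes "i < n" "m \<le> l" "l < K i"
  shows "z i m \<le> z i l"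
proof -
  have "strict_mono_on {..<K i} (z i)" using z_mono \<open>i < n\<close> by simp
  then show ?thesis by (rule strict_mono_on_leD) (use assms in auto)
qed

lemma z_less:
  assumes "i < n" "m < l" "l < K i"
  shows "z i m < z i l"
proof -
  have "strict_mono_on {..<K i} (z i)" using z_mono \<open>i < n\<close> by simp
  then show ?thesis by (rule strict_mono_onD) (use assms in auto)
qed

lemma z_inj: "i < n \<Longrightarrow> l < K i \<Longrightarrow> m < K i \<Longrightarrow> z i l = z i m \<Longrightarrow> l = m"
  using z_mono strict_mono_on_imp_inj_on[of "{..<K i}" "z i"] by (auto simp: inj_on_def)

lemma f_nonneg:
  assumes "i < n" "l < K i"
  shows "0 \<le> f i (z i l)"
  using f_pos assms by (simp add: order_less_imp_le)

lemma z_in_typeset: "l < K i \<Longrightarrow> z i l \<in> typeset K z i"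
  unfolding typeset_def by simp

lemma finite_prof: "finite (prof n K z)"
  unfolding prof_def typeset_def by (simp add: finite_PiE)

lemma sum_typeset: "i < n \<Longrightarrow> (\<Sum>t\<in>typeset K z i. g t) = (\<Sum>l<K i. g (z i l))"
  unfolding typeset_def
  by (rule sum.reindex_cong[OF strict_mono_on_imp_inj_on]) (use z_mono in auto)

lemma others_weight_nonneg:
  assumes "w \<in> prof n K z"
  shows "0 \<le> others_weight i w"
proof (intro prod_nonneg)
  fix j
  assume j: "j \<in> {..<n} - {i}"
  with assms obtain l where "l < K j" "w j = z j l"
    unfolding prof_def typeset_def by auto
  then show "0 \<le> f j (w j)"
    using f_nonneg j by simp
qed

lemma slice_eq_PiE:
  assumes "i < n" "t \<in> typeset K z i"
  shows "slice i t = PiE {..<n} (\<lambda>j. if j = i then {t} else typeset K z j)"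
proof (intro set_eqI iffI)
  fix w
  assume "w \<in> slice i t"
  then show "w \<in> PiE {..<n} (\<lambda>j. if j = i then {t} else typeset K z j)"
    unfolding prof_def by (auto simp: PiE_iff)
next
  fix w
  assume w: "w \<in> PiE {..<n} (\<lambda>j. if j = i then {t} else typeset K z j)"
  then have "w i = t"
    using assms(1) PiE_mem[OF w, of i] by simp
  moreover have "w j \<in> typeset K z j" if "j < n" for j
    using PiE_mem[OF w, of j] that \<open>w i = t\<close> assms(2) by (cases "j = i") auto
  ultimately show "w \<in> slice i t"
    using w unfolding prof_def by (auto simp: PiE_iff)
qed

lemma sum_others_weight_slice:
  assumes i: "i < n" and t: "t \<in> typeset K z i"
  shows "(\<Sum>w\<in>slice i t. others_weight i w) = 1"
proof -
  define g where "g j y = (if j = i then 1 else f j y)" for j y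
  have "(\<Sum>w\<in>slice i t. others_weight i w)
      = (\<Sum>w\<in>PiE {..<n} (\<lambda>j. if j = i then {t} else typeset K z j). \<Prod>j<n. g j (w j))"
    using i by (intro sum.cong slice_eq_PiE[OF i t]) (simp add: g_def prod.remove)
  also have "\<dots> = (\<Prod>j<n. \<Sum>y\<in>(if j = i then {t} else typeset K z j). g j y)"
    by (rule prod_sum_PiE[symmetric]) (auto simp: typeset_def)
  also have "\<dots> = (\<Prod>j<n. 1)"
    using f_sum by (intro prod.cong refl) (auto simp: g_def sum_typeset)
  finally show ?thesis by simp
qed

lemma sum_slice_const:
  "i < n \<Longrightarrow> l < K i \<Longrightarrow> (\<Sum>w\<in>slice i (z i l). others_weight i w * c) = c"
  using sum_others_weight_slice[OF _ z_in_typeset] by (simp add: sum_distrib_right[symmetric])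

lemma sum_prof_by_own_type:
  assumes i: "i < n"
  shows "(\<Sum>v\<in>prof n K z. (\<Prod>j<n. f j (v j)) * G v)
       = (\<Sum>l<K i. f i (z i l) * (\<Sum>w\<in>slice i (z i l). others_weight i w * G w))"
proof -
  have "(\<Sum>v\<in>prof n K z. (\<Prod>j<n. f j (v j)) * G v)
      = (\<Sum>t\<in>typeset K z i. \<Sum>v\<in>slice i t. (\<Prod>j<n. f j (v j)) * G v)"
    using i finite_prof by (intro sum.group[symmetric]) (auto simp: prof_def typeset_def)
  also have "\<dots> = (\<Sum>t\<in>typeset K z i. f i t * (\<Sum>w\<in>slice i t. others_weight i w * G w))"
    using i by (intro sum.cong refl) (auto simp: sum_distrib_left prod.remove mult.assoc)
  finally show ?thesis
    using sum_typeset[OF i] by simp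
qed

lemma revenue_eq_sum_slices:
  assumes "\<And>i v. i < n \<Longrightarrow> v \<in> prof n K z \<Longrightarrow> integrable M (p i v)"
  shows "revenue n K z f M p
       = (\<Sum>i<n. \<Sum>l<K i. f i (z i l) * (\<Sum>w\<in>slice i (z i l). others_weight i w * (\<integral>r. p i w r \<partial>M)))"
proof -
  have "revenue n K z f M p = (\<Sum>v\<in>prof n K z. (\<Prod>j<n. f j (v j)) * (\<Sum>i<n. \<integral>r. p i v r \<partial>M))"
    unfolding revenue_def using assms by (intro sum.cong refl) (simp add: integral_sum)
  also have "\<dots> = (\<Sum>i<n. \<Sum>v\<in>prof n K z. (\<Prod>j<n. f j (v j)) * (\<integral>r. p i v r \<partial>M))"
    by (simp add: sum_distrib_left sum.swap[of _ "prof n K z"])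
  finally show ?thesis
    by (simp add: sum_prof_by_own_type)
qed

subsection \<open>Monotone allocations and information rents\<close>

lemma xhat_nonneg:
  assumes "feasible_alloc n K z x" "i < n"
  shows "0 \<le> xhat n K z f x i t"
  using assms others_weight_nonneg unfolding xhat_def feasible_alloc_def
  by (intro sum_nonneg mult_nonneg_nonneg) auto

lemma xhat_at_mono:
  assumes x: "program_feasible n K z f x" and "i < n" "m \<le> l" "l < K i"
  shows "xhat_at x i m \<le> xhat_at x i l"
  using assms(3,4)
proof (induction l rule: dec_induct)
  case (step l)
  have "\<forall>l. 1 \<le> l \<and> l < K i \<longrightarrow> xhat_at x i (l - 1) \<le> xhat_at x i l"
    using x \<open>i < n\<close> unfolding program_feasible_def by blast
  moreover have "1 \<le> Suc l \<and> Suc l < K i"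
    using step.prems by simp
  ultimately have "xhat_at x i (Suc l - 1) \<le> xhat_at x i (Suc l)"
    by blast
  then show ?case using step by simp
qed simp

definition info_rent :: "((nat \<Rightarrow> real) \<Rightarrow> nat \<Rightarrow> real) \<Rightarrow> nat \<Rightarrow> nat \<Rightarrow> real" where
  "info_rent x i l = (\<Sum>j<l. (z i (Suc j) - z i j) * xhat_at x i j)"

lemma hfun_eq_sqrt: "hfun n K z f x i l = sqrt (z i l * xhat_at x i l - info_rent x i l)"
  unfolding hfun_def info_rent_def by simp

lemma info_rent_diff_bounds:
  assumes "program_feasible n K z f x" "i < n" "m \<le> l" "l < K i"
  shows "(z i l - z i m) * xhat_at x i m \<le> info_rent x i l - info_rent x i m"
    and "info_rent x i l - info_rent x i m \<le> (z i l - z i m) * xhat_at x i l"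
  using sum_increments_bounds[of l "z i" "xhat_at x i" m] assms z_le xhat_at_mono
  unfolding info_rent_def by auto

lemma info_rent_nonneg:
  assumes x: "program_feasible n K z f x" and i: "i < n" and l: "l < K i"
  shows "0 \<le> info_rent x i l"
proof -
  have "0 \<le> (z i l - z i 0) * xhat_at x i 0"
    using z_le[OF i _ l, of 0] x i xhat_nonneg unfolding program_feasible_def by simp
  also have "\<dots> \<le> info_rent x i l"
    using info_rent_diff_bounds(1)[OF x i _ l, of 0] by (simp add: info_rent_def)
  finally show ?thesis .
qed

lemma info_rent_le_surplus:
  assumes x: "program_feasible n K z f x" and i: "i < n" and l: "l < K i"
  shows "info_rent x i l \<le> z i l * xhat_at x i l"
proof -
  have "0 \<le> z i 0 * xhat_at x i l"
    using z_nonneg x i xhat_nonneg unfolding program_feasible_def by simp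
  moreover have "info_rent x i l \<le> (z i l - z i 0) * xhat_at x i l"
    using info_rent_diff_bounds(2)[OF x i _ l, of 0] by (simp add: info_rent_def)
  ultimately show ?thesis by (simp add: algebra_simps)
qed

subsection \<open>The mechanism with payments \<open>h\<^sub>i(v\<^sub>i)\<close>\<close>

lemma hpay_at_type:
  assumes "i < n" "l < K i" "w i = z i l"
  shows "hpay n K z f x i w = (\<lambda>_. hfun n K z f x i l)"
proof -
  have "(THE l'. l' < K i \<and> z i l' = w i) = l"
    using assms z_inj by (intro the_equality) auto
  then show ?thesis unfolding hpay_def[abs_def] by simp
qed

lemma qhat_hpay:
  assumes M: "prob_space M" and x: "program_feasible n K z f x" and i: "i < n" and l: "l < K i"
  shows "qhat_at M (hpay n K z f x) i l = z i l * xhat_at x i l - info_rent x i l"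
proof -
  have "qhat_at M (hpay n K z f x) i l
      = (\<Sum>w\<in>slice i (z i l). others_weight i w * (hfun n K z f x i l)\<^sup>2)"
    unfolding qhat_def using M i l
    by (intro sum.cong refl) (simp add: hpay_at_type prob_space.prob_space)
  also have "\<dots> = (hfun n K z f x i l)\<^sup>2"
    by (rule sum_slice_const[OF i l])
  also have "\<dots> = z i l * xhat_at x i l - info_rent x i l"
    unfolding hfun_eq_sqrt using info_rent_le_surplus[OF x i l] by simp
  finally show ?thesis .
qed

lemma valid_mech_hpay:
  assumes M: "prob_space M" and x: "program_feasible n K z f x"
  shows "valid_mech n K z f M x (hpay n K z f x)"
  unfolding valid_mech_def
proof (intro conjI allI impI ballI)
  show "feasible_alloc n K z x" using x unfolding program_feasible_def by simp
  fix i v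
  show "integrable M (\<lambda>r. (hpay n K z f x i v r)\<^sup>2)"
    using M unfolding hpay_def by (simp add: prob_space.finite_measure finite_measure.integrable_const)
next
  show "BIC n K z f M x (hpay n K z f x)"
    unfolding BIC_def typeset_def
  proof (clarsimp)
    fix i l m
    assume i: "i < n" and l: "l < K i" and m: "m < K i"
    have "(z i l - z i m) * xhat_at x i m \<le> info_rent x i l - info_rent x i m"
    proof (cases "m \<le> l")
      case True
      then show ?thesis using info_rent_diff_bounds(1)[OF x i True l] by simp
    next
      case False
      then show ?thesis using info_rent_diff_bounds(2)[OF x i _ m, of l] by (simp add: algebra_simps)
    qed
    then show "z i l * xhat_at x i m - qhat_at M (hpay n K z f x) i m
           \<le> z i l * xhat_at x i l - qhat_at M (hpay n K z f x) i l"
      by (simp add: qhat_hpay[OF M x i l] qhat_hpay[OF M x i m] algebra_simps)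
  qed
next
  show "BIR n K z f M x (hpay n K z f x)"
    unfolding BIR_def typeset_def
    using qhat_hpay[OF M x] info_rent_nonneg[OF x] by auto
qed (use M in \<open>simp_all add: hpay_def[abs_def]\<close>)

lemma revenue_hpay:
  assumes M: "prob_space M" and x: "program_feasible n K z f x"
  shows "revenue n K z f M (hpay n K z f x) = program_obj n K z f x"
proof -
  have "revenue n K z f M (hpay n K z f x)
      = (\<Sum>i<n. \<Sum>l<K i. f i (z i l) *
           (\<Sum>w\<in>slice i (z i l). others_weight i w * (\<integral>r. hpay n K z f x i w r \<partial>M)))"
    using M by (intro revenue_eq_sum_slices)
      (simp add: hpay_def[abs_def] prob_space.finite_measure finite_measure.integrable_const)
  also have "\<dots> = (\<Sum>i<n. \<Sum>l<K i. f i (z i l) *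
           (\<Sum>w\<in>slice i (z i l). others_weight i w * hfun n K z f x i l))"
    using M by (intro sum.cong refl) (simp add: hpay_at_type prob_space.prob_space)
  also have "\<dots> = program_obj n K z f x"
    unfolding program_obj_def by (simp add: sum_slice_const)
  finally show ?thesis .
qed

subsection \<open>Revenue bound for valid mechanisms\<close>

lemma valid_mech_BIC_at:
  assumes "valid_mech n K z f M x p" "i < n" "l < K i" "m < K i"
  shows "z i l * xhat_at x i m - qhat_at M p i m \<le> z i l * xhat_at x i l - qhat_at M p i l"
proof -
  have "BIC n K z f M x p"
    using assms(1) unfolding valid_mech_def by simp
  then show ?thesis
    unfolding BIC_def using assms(2) z_in_typeset[OF assms(3)] z_in_typeset[OF assms(4)] by simp
qed

lemma valid_mech_BIR_at:
  assumes "valid_mech n K z f M x p" "i < n" "l < K i"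
  shows "qhat_at M p i l \<le> z i l * xhat_at x i l"
  using assms unfolding valid_mech_def BIR_def by (auto dest!: z_in_typeset)

lemma valid_mech_program_feasible:
  assumes v: "valid_mech n K z f M x p"
  shows "program_feasible n K z f x"
  unfolding program_feasible_def
proof (intro conjI allI impI)
  show "feasible_alloc n K z x" using v unfolding valid_mech_def by simp
  fix i l
  assume i: "i < n" and l: "1 \<le> l \<and> l < K i"
  then have "l - 1 < K i" "z i (l - 1) < z i l"
    using z_less[OF i, of "l - 1" l] by auto
  then have "(z i l - z i (l - 1)) * xhat_at x i (l - 1) \<le> (z i l - z i (l - 1)) * xhat_at x i l"
    using valid_mech_BIC_at[OF v i, of l "l - 1"] valid_mech_BIC_at[OF v i, of "l - 1" l] l
    by (simp add: algebra_simps)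
  then show "xhat_at x i (l - 1) \<le> xhat_at x i l"
    using \<open>z i (l - 1) < z i l\<close> by (simp add: mult_le_cancel_left_pos)
qed

text \<open>Each step up from type \<open>l\<close> to \<open>l + 1\<close> can raise the perceived payment by at most
  \<open>z\<^sub>i\<^sub>,\<^sub>l\<^sub>+\<^sub>1 (X\<^sub>i(l+1) - X\<^sub>i(l))\<close>, by the BIC constraint of type \<open>l + 1\<close> against reporting \<open>l\<close>.\<close>

lemma qhat_le_surplus_minus_info_rent:
  assumes v: "valid_mech n K z f M x p" and i: "i < n"
  shows "l < K i \<Longrightarrow> qhat_at M p i l \<le> z i l * xhat_at x i l - info_rent x i l"
proof (induction l)
  case 0
  then show ?case using valid_mech_BIR_at[OF v i] by (simp add: info_rent_def)
next
  case (Suc l)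
  have "info_rent x i (Suc l) = info_rent x i l + z i (Suc l) * xhat_at x i l - z i l * xhat_at x i l"
    unfolding info_rent_def by (simp add: algebra_simps)
  then show ?case
    using Suc valid_mech_BIC_at[OF v i Suc.prems, of l] by simp
qed

lemma revenue_le_program_obj:
  assumes v: "valid_mech n K z f M x p"
  shows "revenue n K z f M p \<le> program_obj n K z f x"
proof -
  have M: "prob_space M"
    and meas: "\<And>i w. i < n \<Longrightarrow> w \<in> prof n K z \<Longrightarrow> p i w \<in> borel_measurable M"
    and sq_int: "\<And>i w. i < n \<Longrightarrow> w \<in> prof n K z \<Longrightarrow> integrable M (\<lambda>r. (p i w r)\<^sup>2)"
    using v unfolding valid_mech_def by auto
  have integrable: "integrable M (p i w)" if "i < n" "w \<in> prof n K z" for i w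
    using M meas[OF that] sq_int[OF that]
    by (simp add: prob_space.finite_measure finite_measure.square_integrable_imp_integrable)
  have expected_payment_le_hfun:
    "(\<Sum>w\<in>slice i (z i l). others_weight i w * (\<integral>r. p i w r \<partial>M)) \<le> hfun n K z f x i l"
    if i: "i < n" and l: "l < K i" for i l
  proof -
    have "(\<Sum>w\<in>slice i (z i l). others_weight i w * (\<integral>r. p i w r \<partial>M)) \<le> sqrt (qhat_at M p i l)"
      unfolding qhat_def
    proof (rule weighted_integral_le_sqrt[OF M])
      show "(\<Sum>w\<in>slice i (z i l). others_weight i w) = 1"
        by (rule sum_others_weight_slice[OF i z_in_typeset[OF l]])
    qed (simp_all add: others_weight_nonneg meas sq_int i)
    also have "\<dots> \<le> hfun n K z f x i l"
      unfolding hfun_eq_sqrt using qhat_le_surplus_minus_info_rent[OF v i l] by simp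
    finally show ?thesis .
  qed
  have "revenue n K z f M p
      = (\<Sum>i<n. \<Sum>l<K i. f i (z i l) * (\<Sum>w\<in>slice i (z i l). others_weight i w * (\<integral>r. p i w r \<partial>M)))"
    using integrable by (rule revenue_eq_sum_slices)
  also have "\<dots> \<le> (\<Sum>i<n. \<Sum>l<K i. f i (z i l) * hfun n K z f x i l)"
    using f_nonneg expected_payment_le_hfun by (intro sum_mono mult_left_mono) simp_all
  finally show ?thesis
    unfolding program_obj_def .
qed

end

theorem mainTheorem7:
  fixes n :: nat and K :: "nat \<Rightarrow> nat" and z :: "nat \<Rightarrow> nat \<Rightarrow> real"
    and f :: "nat \<Rightarrow> real \<Rightarrow> real"
  assumes K_pos: "\<forall>i<n. 1 \<le> K i"
    and z_mono: "\<forall>i<n. strict_mono_on {..<K i} (z i)"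
    and z_nonneg: "\<forall>i<n. 0 \<le> z i 0"
    and f_pos: "\<forall>i<n. \<forall>l<K i. 0 < f i (z i l)"
    and f_sum: "\<forall>i<n. (\<Sum>l<K i. f i (z i l)) = 1"
  shows "\<exists>opt::real.
     (\<exists>x. program_feasible n K z f x \<and> program_obj n K z f x = opt) \<and>
     (\<forall>x. program_feasible n K z f x \<longrightarrow> program_obj n K z f x \<le> opt) \<and>
     Sup {revenue n K z f M p | (M :: 'r measure) x p. valid_mech n K z f M x p} = opt \<and>
     (\<forall>(M :: 'r measure) x p. valid_mech n K z f M x p \<longrightarrow> revenue n K z f M p \<le> opt) \<and>
     (\<forall>x. program_feasible n K z f x \<and> program_obj n K z f x = opt \<longrightarrow>
        (\<forall>M :: 'r measure. prob_space M \<longrightarrow>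
           valid_mech n K z f M x (hpay n K z f x) \<and>
           revenue n K z f M (hpay n K z f x) = opt))"
proof -
  interpret type_spaces n K z f
    using z_mono z_nonneg f_pos f_sum by unfold_locales
  obtain x0 where x0: "program_feasible n K z f x0"
    and x0_max: "\<And>y. program_feasible n K z f y \<Longrightarrow> program_obj n K z f y \<le> program_obj n K z f x0"
    using program_attains_max by blast
  define opt where "opt = program_obj n K z f x0"
  have revenue_le_opt: "revenue n K z f M p \<le> opt" if "valid_mech n K z f M x p"
    for M :: "'r measure" and x p
    using revenue_le_program_obj[OF that] x0_max[OF valid_mech_program_feasible[OF that]]
    unfolding opt_def by linarith
  define M0 :: "'r measure" where "M0 = return (count_space UNIV) undefined"
  have M0: "prob_space M0"
    unfolding M0_def by (rule prob_space_return) simp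
  have "opt \<in> {revenue n K z f M p | (M :: 'r measure) x p. valid_mech n K z f M x p}"
  proof (intro CollectI exI conjI)
    show "opt = revenue n K z f M0 (hpay n K z f x0)"
      using revenue_hpay[OF M0 x0] unfolding opt_def by simp
  qed (rule valid_mech_hpay[OF M0 x0])
  then have Sup_eq: "Sup {revenue n K z f M p | (M :: 'r measure) x p. valid_mech n K z f M x p} = opt"
    by (rule cSup_eq_maximum) (use revenue_le_opt in blast)
  show ?thesis
  proof (intro exI[of _ opt] conjI allI impI)
    show "\<exists>x. program_feasible n K z f x \<and> program_obj n K z f x = opt"
      using x0 unfolding opt_def by blast
  next
    fix x
    assume "program_feasible n K z f x"
    then show "program_obj n K z f x \<le> opt"
      unfolding opt_def by (rule x0_max)
  next
    show "Sup {revenue n K z f M p | (M :: 'r measure) x p. valid_mech n K z f M x p} = opt"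
      by (rule Sup_eq)
  next
    fix M :: "'r measure" and x p
    assume "valid_mech n K z f M x p"
    then show "revenue n K z f M p \<le> opt"
      by (rule revenue_le_opt)
  next
    fix x and M :: "'r measure"
    assume x: "program_feasible n K z f x \<and> program_obj n K z f x = opt" and M: "prob_space M"
    show "valid_mech n K z f M x (hpay n K z f x)"
      using valid_mech_hpay[OF M] x by simp
    show "revenue n K z f M (hpay n K z f x) = opt"
      using revenue_hpay[OF M] x by simp
  qed
qed

end
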